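(* Let $\mathbb{X}$ be a metric space, $f:[0,1]\to\mathbb{X}$ continuous, $\xi>6$, and $0<r_-<r_+<\infty$. Let $\{J_i\}_{i=1}^I$ ($I\in\mathbb{N}\cup\{\infty\}$) be closed intervals in $[0,1]$ and $(k_i)_{i=1}^I$ integers bounded from below such that: (1) $J_i\cap J_{i+1}\neq\emptyset$ for all $1\leq i<I$; (2) $\mathrm{diam}\,f(J_i)\leq\xi^{-k_i}r_+$ for all $i$; (3) whenever $i\neq j$ and $k_i=k_j=k$, there exist at least $\lceil3r_+/r_-\rceil$ pairwise disjoint closed intervals $K\subset[0,1]$ with $\mathrm{diam}\,f(K)\geq\xi^{-k}r_-$, each lying (as a subset of $\mathbb{R}$) between $J_i$ and $J_j$. If $\xi>r_+/r_-$, then there is a unique $M\geq1$ with $k_M=\min_{i\geq1}k_i$, and $$\sum_{i=1}^I\mathrm{diam}\,f(J_i)\leq(1+3/\xi)\,\xi^{-k_M}r_+.$$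
   Context: A closed interval $K$ lies between two intervals $J_i,J_j$ if $K$ is contained in the closed interval whose endpoints are the right endpoint of the left one of $J_i,J_j$ and the left endpoint of the right one. *)

theory Defs
  imports "HOL-Analysis.Analysis" "HOL-Library.Extended_Nat"
begin

definition lies_between :: "real set \<Rightarrow> real \<Rightarrow> real \<Rightarrow> real \<Rightarrow> real \<Rightarrow> bool" where
  "lies_between K a1 b1 a2 b2 \<longleftrightarrow> K \<subseteq> {b1..a2} \<or> K \<subseteq> {b2..a1}"

definition idx :: "enat \<Rightarrow> nat set" where
  "idx I = {i. 1 \<le> i \<and> enat i \<le> I}"

end

theory Submission
  imports Defs
begin

text \<open>
  The proof is an induction on segments of consecutive intervals: if all levels \<open>k l\<close> on a
  segment are at least \<open>\<kappa>\<close>, then the level \<open>\<kappa>\<close> occurs at most once on it, and the diameters of the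
  images of its intervals sum to at most \<open>(1 + 3/\<xi>) \<xi>^(-\<kappa>) r\<^sub>+\<close>.

  For uniqueness take two successive occurrences \<open>i < j\<close> of \<open>\<kappa>\<close>. They are not adjacent, since an
  interval lying between two touching intervals is a point. Otherwise, by induction, the minimal
  level strictly between them is attained at a single index \<open>M\<close>, exceeds \<open>\<kappa>\<close>, and all other levels
  there are at least \<open>\<kappa> + 2\<close>. Each of the (at least three) disjoint separating intervals \<open>K\<close> has
  \<open>diam f(K) \<ge> \<xi>^(-\<kappa>) r\<^sub>- > \<xi>^(-\<kappa>-1) r\<^sub>+ \<ge> diam f(J\<^sub>M)\<close>, so it is not inside \<open>J\<^sub>M\<close>; hence it either
  contains an endpoint of \<open>J\<^sub>M\<close> or misses \<open>J\<^sub>M\<close>, and one of the three misses it. That \<open>K\<close> lies in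
  the union of the two chains flanking \<open>J\<^sub>M\<close>, and as it is connected, \<open>diam f(K)\<close> is at most the sum
  of their image diameters, i.e. at most \<open>2 (1 + 3/\<xi>) \<xi>^(-\<kappa>-2) r\<^sub>+ < \<xi>^(-\<kappa>) r\<^sub>-\<close>: a contradiction.

  The sum bound follows by splitting the segment at its unique minimum \<open>M\<close>, since
  \<open>\<xi>^(-\<kappa>) r\<^sub>+ + 2 (1 + 3/\<xi>) \<xi>^(-\<kappa>-1) r\<^sub>+ \<le> (1 + 3/\<xi>) \<xi>^(-\<kappa>) r\<^sub>+\<close> for \<open>\<xi> \<ge> 6\<close>.
\<close>

subsection \<open>Diameters of chains of sets\<close>

lemma diameter_le_metric:
  fixes S :: "'a::metric_space set"
  assumes "S \<noteq> {} \<or> 0 \<le> \<delta>" and "\<And>x y. x \<in> S \<Longrightarrow> y \<in> S \<Longrightarrow> dist x y \<le> \<delta>"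
  shows "diameter S \<le> \<delta>"
  using assms by (auto simp: diameter_def intro: cSUP_least)

lemma diameter_Un_le:
  fixes S T :: "'a::metric_space set"
  assumes "bounded S" "bounded T" "S \<inter> T \<noteq> {}"
  shows "diameter (S \<union> T) \<le> diameter S + diameter T"
proof (rule diameter_le_metric)
  obtain z where z: "z \<in> S" "z \<in> T" using assms(3) by blast
  show "S \<union> T \<noteq> {} \<or> 0 \<le> diameter S + diameter T" using z by blast
  have dS: "dist x y \<le> diameter S" if "x \<in> S" "y \<in> S" for x y
    using diameter_bounded_bound[OF assms(1)] that by blast
  have dT: "dist x y \<le> diameter T" if "x \<in> T" "y \<in> T" for x y
    using diameter_bounded_bound[OF assms(2)] that by blast
  fix x y assume "x \<in> S \<union> T" "y \<in> S \<union> T"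
  then show "dist x y \<le> diameter S + diameter T"
    using dS[of z z] dT[of z z] dS[of x z] dT[of z y] dS[of z y] dT[of x z] dS[of x y] dT[of x y]
      dist_triangle[of x y z] z by (auto simp: dist_commute)
qed

lemma diameter_UN_chain_le:
  fixes S :: "nat \<Rightarrow> 'a::metric_space set"
  assumes "\<And>l. l \<in> {p..<q} \<Longrightarrow> bounded (S l)"
    and "\<And>l. p \<le> l \<Longrightarrow> Suc l < q \<Longrightarrow> S l \<inter> S (Suc l) \<noteq> {}"
  shows "diameter (\<Union>l\<in>{p..<q}. S l) \<le> (\<Sum>l\<in>{p..<q}. diameter (S l))"
  using assms
proof (induction q)
  case 0
  then show ?case by simp
next
  case (Suc q)
  show ?case
  proof (cases "p < q")
    case False
    then show ?thesis by (auto simp: atLeastLessThanSuc)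
  next
    case True
    then obtain q' where q: "q = Suc q'" using not0_implies_Suc by fastforce
    let ?U = "\<Union>l\<in>{p..<q}. S l"
    have U: "diameter ?U \<le> (\<Sum>l\<in>{p..<q}. diameter (S l))"
      using Suc.prems by (intro Suc.IH) auto
    obtain z where z: "z \<in> S q'" "z \<in> S q" using Suc.prems(2)[of q'] True q by auto
    have "z \<in> ?U" using z(1) True q by (intro UN_I[of q']) auto
    then have meet: "?U \<inter> S q \<noteq> {}" using z(2) by blast
    have "bounded ?U" using Suc.prems(1) by (intro bounded_UN) auto
    then have "diameter (?U \<union> S q) \<le> diameter ?U + diameter (S q)"
      using Suc.prems(1) meet by (intro diameter_Un_le) auto
    moreover have "(\<Union>l\<in>{p..<Suc q}. S l) = ?U \<union> S q"
      using True by (auto simp: atLeastLessThanSuc)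
    ultimately show ?thesis using U True by (simp add: atLeastLessThanSuc)
  qed
qed

lemma connected_UN_chain:
  assumes "\<And>l. l \<in> {p..<q} \<Longrightarrow> connected (S l)"
    and "\<And>l. p \<le> l \<Longrightarrow> Suc l < q \<Longrightarrow> S l \<inter> S (Suc l) \<noteq> {}"
  shows "connected (\<Union>l\<in>{p..<q}. S l)"
  using assms
proof (induction q)
  case 0
  then show ?case by simp
next
  case (Suc q)
  show ?case
  proof (cases "p < q")
    case False
    then show ?thesis using Suc.prems(1) by (auto simp: atLeastLessThanSuc)
  next
    case True
    then obtain q' where q: "q = Suc q'" using not0_implies_Suc by fastforce
    obtain z where z: "z \<in> S q'" "z \<in> S q" using Suc.prems(2)[of q'] True q by auto
    have "z \<in> (\<Union>l\<in>{p..<q}. S l)" using z(1) True q by (intro UN_I[of q']) auto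
    then have "(\<Union>l\<in>{p..<q}. S l) \<inter> S q \<noteq> {}" using z(2) by blast
    moreover have "(\<Union>l\<in>{p..<Suc q}. S l) = (\<Union>l\<in>{p..<q}. S l) \<union> S q"
      using True by (auto simp: atLeastLessThanSuc)
    ultimately show ?thesis using Suc by (auto intro!: connected_Un)
  qed
qed

lemma diameter_connected_subset_Un_closed:
  fixes K A B :: "'a::metric_space set"
  assumes "connected K" "closed A" "closed B" "bounded A" "bounded B" "K \<subseteq> A \<union> B"
  shows "diameter K \<le> diameter A + diameter B"
proof -
  have A0: "0 \<le> diameter A" and B0: "0 \<le> diameter B"
    using assms(4,5) by (simp_all add: diameter_ge_0)
  consider "K \<subseteq> A" | "K \<subseteq> B" | "A \<inter> B \<inter> K \<noteq> {}"
  proof (cases "A \<inter> B \<inter> K = {}")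
    case True
    then have "A \<inter> K = {} \<or> B \<inter> K = {}"
      using assms(1,2,3,6) unfolding connected_closed by blast
    then show ?thesis using assms(6) that by blast
  qed blast
  then show ?thesis
  proof cases
    case 1
    then show ?thesis using diameter_subset[OF 1 assms(4)] B0 by linarith
  next
    case 2
    then show ?thesis using diameter_subset[OF 2 assms(5)] A0 by linarith
  next
    case 3
    then have "diameter K \<le> diameter (A \<union> B)"
      using assms by (intro diameter_subset) auto
    also have "\<dots> \<le> diameter A + diameter B"
      using 3 assms by (intro diameter_Un_le) auto
    finally show ?thesis .
  qed
qed

subsection \<open>Intervals of the real line\<close>

lemma lies_between_touching:
  assumes "{a1..b1} \<inter> {a2..b2} \<noteq> {}" "c \<le> d" "lies_between {c..d} a1 b1 a2 b2"
  shows "c = d"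
  using assms unfolding lies_between_def by auto

lemma lies_between_subset_connected:
  fixes W :: "real set"
  assumes "connected W" "x \<in> W" "x \<in> {a1..b1}" "y \<in> W" "y \<in> {a2..b2}"
    and "lies_between K a1 b1 a2 b2"
  shows "K \<subseteq> W"
proof
  fix z assume "z \<in> K"
  then have "x \<le> z \<and> z \<le> y \<or> y \<le> z \<and> z \<le> x"
    using assms(3,5,6) unfolding lies_between_def by auto
  then show "z \<in> W" using assms(1,2,4) unfolding connected_iff_interval by blast
qed

lemma one_of_three_disjoint_intervals_misses:
  fixes c d :: "nat \<Rightarrow> real"
  assumes not_inside: "\<And>m. m < 3 \<Longrightarrow> \<not> {c m..d m} \<subseteq> {\<alpha>..\<beta>}"
    and disjoint: "\<And>m m'. m < 3 \<Longrightarrow> m' < 3 \<Longrightarrow> m \<noteq> m' \<Longrightarrow> {c m..d m} \<inter> {c m'..d m'} = {}"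
  shows "\<exists>m<3. {c m..d m} \<inter> {\<alpha>..\<beta>} = {}"
proof (rule ccontr)
  assume "\<not> ?thesis"
  then have "\<alpha> \<in> {c m..d m} \<or> \<beta> \<in> {c m..d m}" if "m < 3" for m
    using not_inside[OF that] that by fastforce
  then have "\<alpha> \<in> {c 0..d 0} \<or> \<beta> \<in> {c 0..d 0}" "\<alpha> \<in> {c 1..d 1} \<or> \<beta> \<in> {c 1..d 1}"
    "\<alpha> \<in> {c 2..d 2} \<or> \<beta> \<in> {c 2..d 2}"
    by simp_all
  moreover have "{c 0..d 0} \<inter> {c 1..d 1} = {}" "{c 0..d 0} \<inter> {c 2..d 2} = {}"
    "{c 1..d 1} \<inter> {c 2..d 2} = {}"
    by (rule disjoint; simp)+
  ultimately show False by (metis IntI empty_iff)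
qed

locale separated_chain =
  fixes f :: "real \<Rightarrow> 'X::metric_space"
    and \<xi> rm rp :: real
    and I :: enat
    and a b :: "nat \<Rightarrow> real"
    and k :: "nat \<Rightarrow> int"
  assumes cont: "continuous_on {0..1} f"
    and xi_gt_6: "\<xi> > 6"
    and rm_pos: "0 < rm" and rm_less_rp: "rm < rp"
    and J_unit: "\<And>i. i \<in> idx I \<Longrightarrow> 0 \<le> a i \<and> a i \<le> b i \<and> b i \<le> 1"
    and chain: "\<And>i. i \<in> idx I \<Longrightarrow> Suc i \<in> idx I \<Longrightarrow> {a i..b i} \<inter> {a (Suc i)..b (Suc i)} \<noteq> {}"
    and diameter_J: "\<And>i. i \<in> idx I \<Longrightarrow> diameter (f ` {a i..b i}) \<le> \<xi> powi (- k i) * rp"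
    and separated: "\<And>i j. i \<in> idx I \<Longrightarrow> j \<in> idx I \<Longrightarrow> i \<noteq> j \<Longrightarrow> k i = k j \<Longrightarrow>
        \<exists>c d :: nat \<Rightarrow> real.
          (\<forall>m < nat \<lceil>3 * rp / rm\<rceil>. 0 \<le> c m \<and> c m \<le> d m \<and> d m \<le> 1
              \<and> diameter (f ` {c m..d m}) \<ge> \<xi> powi (- k i) * rm
              \<and> lies_between {c m..d m} (a i) (b i) (a j) (b j))
          \<and> (\<forall>m < nat \<lceil>3 * rp / rm\<rceil>. \<forall>m' < nat \<lceil>3 * rp / rm\<rceil>.
               m \<noteq> m' \<longrightarrow> {c m..d m} \<inter> {c m'..d m'} = {})"
    and xi_gt_ratio: "\<xi> > rp / rm"
begin

abbreviation J :: "nat \<Rightarrow> real set" where "J l \<equiv> {a l..b l}"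

abbreviation dJ :: "nat \<Rightarrow> real" where "dJ l \<equiv> diameter (f ` J l)"

definition bound :: "int \<Rightarrow> real" where "bound \<kappa> = (1 + 3 / \<xi>) * \<xi> powi (- \<kappa>) * rp"

subsection \<open>Arithmetic of the scales\<close>

lemma xi_powi_pos: "0 < \<xi> powi n"
  using xi_gt_6 by simp

lemma xi_powi_Suc: "\<xi> powi (- (\<kappa> + 1)) = \<xi> powi (- \<kappa>) / \<xi>"
  using xi_gt_6 by (simp add: power_int_diff)

lemma xi_powi_antimono: "\<kappa> \<le> \<kappa>' \<Longrightarrow> \<xi> powi (- \<kappa>') \<le> \<xi> powi (- \<kappa>)"
  using xi_gt_6 by (intro power_int_increasing) auto

lemma bound_nonneg: "0 \<le> bound \<kappa>"
  unfolding bound_def using xi_gt_6 xi_powi_pos[of "- \<kappa>"] rm_pos rm_less_rp by simp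

lemma bound_antimono: "\<kappa> \<le> \<kappa>' \<Longrightarrow> bound \<kappa>' \<le> bound \<kappa>"
  unfolding bound_def using xi_powi_antimono[of \<kappa> \<kappa>'] xi_gt_6 rm_pos rm_less_rp
  by (intro mult_right_mono mult_left_mono) auto

lemma rp_less_xi_rm: "rp < \<xi> * rm"
  using xi_gt_ratio rm_pos by (simp add: divide_less_eq mult.commute)

lemma next_scale_less: "\<xi> powi (- (\<kappa> + 1)) * rp < \<xi> powi (- \<kappa>) * rm"
proof -
  have "\<xi> powi (- (\<kappa> + 1)) * rp = \<xi> powi (- \<kappa>) * (rp / \<xi>)"
    by (subst xi_powi_Suc) simp
  also have "\<dots> < \<xi> powi (- \<kappa>) * rm"
    using rp_less_xi_rm xi_gt_6 xi_powi_pos by (simp add: field_simps)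
  finally show ?thesis .
qed

lemma bound_recursion: "\<xi> powi (- \<kappa>) * rp + 2 * bound (\<kappa> + 1) \<le> bound \<kappa>"
proof -
  let ?t = "\<xi> powi (- \<kappa>)"
  have "1 + 2 * (1 + 3 / \<xi>) / \<xi> \<le> 1 + 3 / \<xi>"
    using xi_gt_6 by (simp add: field_simps)
  then have "(1 + 2 * (1 + 3 / \<xi>) / \<xi>) * (?t * rp) \<le> (1 + 3 / \<xi>) * (?t * rp)"
    using xi_powi_pos[of "- \<kappa>"] rm_pos rm_less_rp by (intro mult_right_mono) auto
  then show ?thesis
    unfolding bound_def xi_powi_Suc using xi_gt_6 by (simp add: field_simps)
qed

lemma two_bounds_less: "2 * bound (\<kappa> + 2) < \<xi> powi (- \<kappa>) * rm"
proof -
  let ?t = "\<xi> powi (- \<kappa>)"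
  have "2 * (\<xi> + 3) * rp < 2 * (\<xi> + 3) * (\<xi> * rm)"
    using rp_less_xi_rm xi_gt_6 by (intro mult_strict_left_mono) auto
  also have "\<dots> \<le> \<xi> * \<xi> * (\<xi> * rm)"
  proof (rule mult_right_mono)
    have "6 * \<xi> \<le> \<xi> * \<xi>" using xi_gt_6 by (intro mult_right_mono) auto
    moreover have "2 * (\<xi> + 3) = 2 * \<xi> + 6" by simp
    ultimately show "2 * (\<xi> + 3) \<le> \<xi> * \<xi>" using xi_gt_6 by linarith
  qed (use xi_gt_6 rm_pos in simp)
  finally have key: "2 * (\<xi> + 3) * rp < \<xi> ^ 3 * rm" by (simp add: power3_eq_cube ac_simps)
  have scale: "\<xi> powi (- (\<kappa> + 2)) = ?t / \<xi> / \<xi>"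
    using xi_powi_Suc[of "\<kappa> + 1"] xi_powi_Suc[of \<kappa>] by (simp add: add.assoc)
  have "2 * bound (\<kappa> + 2) = ?t / \<xi> ^ 3 * (2 * (\<xi> + 3) * rp)"
    unfolding bound_def scale using xi_gt_6 by (simp add: field_simps power3_eq_cube)
  also have "\<dots> < ?t / \<xi> ^ 3 * (\<xi> ^ 3 * rm)"
    using key xi_powi_pos[of "- \<kappa>"] xi_gt_6 by (intro mult_strict_left_mono) auto
  also have "\<dots> = ?t * rm"
    using xi_gt_6 by simp
  finally show ?thesis .
qed

lemma three_le_nat_ceiling_ratio: "3 \<le> nat \<lceil>3 * rp / rm\<rceil>"
proof -
  have "3 < 3 * rp / rm" using rm_pos rm_less_rp by (simp add: less_divide_eq)
  then show ?thesis by linarith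
qed

lemma J_subset_unit: "l \<in> idx I \<Longrightarrow> J l \<subseteq> {0..1}"
  using J_unit[of l] by auto

lemma compact_image: "S \<subseteq> {0..1} \<Longrightarrow> compact S \<Longrightarrow> compact (f ` S)"
  using cont by (meson compact_continuous_image continuous_on_subset)

lemma bounded_image_J: "l \<in> idx I \<Longrightarrow> bounded (f ` J l)"
  by (intro compact_imp_bounded compact_image J_subset_unit compact_Icc)

lemma chain_J:
  assumes "{p..<q} \<subseteq> idx I" "p \<le> l" "Suc l < q"
  shows "J l \<inter> J (Suc l) \<noteq> {}"
  using assms by (intro chain) auto

lemma chain_image_J:
  assumes "{p..<q} \<subseteq> idx I" "p \<le> l" "Suc l < q"
  shows "f ` J l \<inter> f ` J (Suc l) \<noteq> {}"
  using chain_J[OF assms] by blast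

lemma UN_J_subset_unit: "{p..<q} \<subseteq> idx I \<Longrightarrow> (\<Union>l\<in>{p..<q}. J l) \<subseteq> {0..1}"
  using J_subset_unit by (meson UN_least subsetD)

lemma connected_UN_J:
  assumes "{p..<q} \<subseteq> idx I"
  shows "connected (\<Union>l\<in>{p..<q}. J l)"
proof (rule connected_UN_chain)
  show "J l \<inter> J (Suc l) \<noteq> {}" if "p \<le> l" "Suc l < q" for l
    using chain_J[OF assms that] .
qed simp

lemma diameter_image_UN_J_le:
  "{p..<q} \<subseteq> idx I \<Longrightarrow> diameter (f ` (\<Union>l\<in>{p..<q}. J l)) \<le> (\<Sum>l\<in>{p..<q}. dJ l)"
  unfolding image_UN using bounded_image_J chain_image_J by (intro diameter_UN_chain_le) auto

lemma compact_image_UN_J: "{p..<q} \<subseteq> idx I \<Longrightarrow> compact (f ` (\<Union>l\<in>{p..<q}. J l))"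
  by (intro compact_image UN_J_subset_unit compact_UN) auto

lemma diameter_image_avoiding:
  assumes seg: "{p..<q} \<subseteq> idx I" and M: "M \<in> {p..<q}"
    and K: "K \<subseteq> (\<Union>l\<in>{p..<q}. J l) - J M" "connected K"
  shows "diameter (f ` K) \<le> (\<Sum>l\<in>{p..<M}. dJ l) + (\<Sum>l\<in>{Suc M..<q}. dJ l)"
proof -
  let ?A = "\<Union>l\<in>{p..<M}. J l" and ?B = "\<Union>l\<in>{Suc M..<q}. J l"
  have segA: "{p..<M} \<subseteq> idx I" and segB: "{Suc M..<q} \<subseteq> idx I" using seg M by auto
  have "K \<subseteq> ?A \<union> ?B"
  proof
    fix x assume "x \<in> K"
    then have "x \<in> (\<Union>l\<in>{p..<q}. J l) - J M" using K(1) by (rule subsetD[rotated])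
    then obtain l where "l \<in> {p..<q}" "x \<in> J l" "x \<notin> J M" by blast
    then have "l \<in> {p..<q} - {M}" "x \<in> J l" by auto
    then show "x \<in> ?A \<union> ?B" using M by (cases "l < M") auto
  qed
  then have "f ` K \<subseteq> f ` ?A \<union> f ` ?B" by (metis image_Un image_mono)
  moreover have "K \<subseteq> {0..1}" using K(1) UN_J_subset_unit[OF seg] by blast
  then have "connected (f ` K)"
    using K(2) cont by (meson connected_continuous_image continuous_on_subset)
  moreover have "compact (f ` ?A)" "compact (f ` ?B)"
    using segA segB by (simp_all add: compact_image_UN_J)
  ultimately have "diameter (f ` K) \<le> diameter (f ` ?A) + diameter (f ` ?B)"
    by (intro diameter_connected_subset_Un_closed) (auto intro: compact_imp_closed compact_imp_bounded)
  also have "\<dots> \<le> (\<Sum>l\<in>{p..<M}. dJ l) + (\<Sum>l\<in>{Suc M..<q}. dJ l)"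
    using segA segB by (intro add_mono diameter_image_UN_J_le)
  finally show ?thesis .
qed

lemma three_separating_intervals:
  assumes "i \<in> idx I" "j \<in> idx I" "i \<noteq> j" "k i = k j"
  obtains c d :: "nat \<Rightarrow> real" where
    "\<And>m. m < 3 \<Longrightarrow> c m \<le> d m"
    "\<And>m. m < 3 \<Longrightarrow> \<xi> powi (- k i) * rm \<le> diameter (f ` {c m..d m})"
    "\<And>m. m < 3 \<Longrightarrow> lies_between {c m..d m} (a i) (b i) (a j) (b j)"
    "\<And>m m'. m < 3 \<Longrightarrow> m' < 3 \<Longrightarrow> m \<noteq> m' \<Longrightarrow> {c m..d m} \<inter> {c m'..d m'} = {}"
proof -
  obtain c d :: "nat \<Rightarrow> real" where
    cd: "\<forall>m < nat \<lceil>3 * rp / rm\<rceil>. 0 \<le> c m \<and> c m \<le> d m \<and> d m \<le> 1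
          \<and> diameter (f ` {c m..d m}) \<ge> \<xi> powi (- k i) * rm
          \<and> lies_between {c m..d m} (a i) (b i) (a j) (b j)"
      "\<forall>m < nat \<lceil>3 * rp / rm\<rceil>. \<forall>m' < nat \<lceil>3 * rp / rm\<rceil>.
          m \<noteq> m' \<longrightarrow> {c m..d m} \<inter> {c m'..d m'} = {}"
    using separated[OF assms] by blast
  have "m < nat \<lceil>3 * rp / rm\<rceil>" if "m < 3" for m using that three_le_nat_ceiling_ratio by linarith
  then show thesis by (intro that[of c d]) (use cd in auto)
qed

lemma large_not_subset_J:
  assumes "l \<in> idx I" "\<kappa> < k l" "\<xi> powi (- \<kappa>) * rm \<le> diameter (f ` S)"
  shows "\<not> S \<subseteq> J l"
proof
  assume "S \<subseteq> J l"
  then have "diameter (f ` S) \<le> dJ l"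
    using bounded_image_J[OF assms(1)] by (intro diameter_subset image_mono)
  also have "\<dots> \<le> \<xi> powi (- k l) * rp"
    using diameter_J[OF assms(1)] .
  also have "\<dots> \<le> \<xi> powi (- (\<kappa> + 1)) * rp"
    using assms(2) rm_pos rm_less_rp by (intro mult_right_mono xi_powi_antimono) auto
  also have "\<dots> < \<xi> powi (- \<kappa>) * rm"
    by (rule next_scale_less)
  finally show False using assms(3) by simp
qed

lemma adjacent_levels_differ:
  assumes "i \<in> idx I" "Suc i \<in> idx I"
  shows "k i \<noteq> k (Suc i)"
proof
  assume "k i = k (Suc i)"
  then obtain c d :: "nat \<Rightarrow> real" where cd: "\<And>m. m < 3 \<Longrightarrow> c m \<le> d m"
    and large: "\<And>m. m < 3 \<Longrightarrow> \<xi> powi (- k i) * rm \<le> diameter (f ` {c m..d m})"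
    and between: "\<And>m. m < 3 \<Longrightarrow> lies_between {c m..d m} (a i) (b i) (a (Suc i)) (b (Suc i))"
    and "\<And>m m'. m < 3 \<Longrightarrow> m' < 3 \<Longrightarrow> m \<noteq> m' \<Longrightarrow> {c m..d m} \<inter> {c m'..d m'} = {}"
    using three_separating_intervals[OF assms n_not_Suc_n] by blast
  have "c 0 = d 0"
    using lies_between_touching[OF chain[OF assms] cd between] by simp
  then have "diameter (f ` {c 0..d 0}) = 0" by simp
  moreover have "0 < \<xi> powi (- k i) * rm"
    using xi_powi_pos rm_pos by simp
  ultimately show False using large[of 0] by simp
qed

subsection \<open>The induction on segments\<close>

definition controlled :: "nat \<Rightarrow> nat \<Rightarrow> bool" where
  "controlled p q \<longleftrightarrow> (\<forall>\<kappa>. (\<forall>l\<in>{p..<q}. \<kappa> \<le> k l) \<longrightarrow>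
     (\<forall>i\<in>{p..<q}. \<forall>j\<in>{p..<q}. k i = \<kappa> \<longrightarrow> k j = \<kappa> \<longrightarrow> i = j)
     \<and> (\<Sum>l\<in>{p..<q}. dJ l) \<le> bound \<kappa>)"

lemma controlled_unique:
  "controlled p q \<Longrightarrow> \<forall>l\<in>{p..<q}. \<kappa> \<le> k l \<Longrightarrow> i \<in> {p..<q} \<Longrightarrow> j \<in> {p..<q} \<Longrightarrow>
    k i = \<kappa> \<Longrightarrow> k j = \<kappa> \<Longrightarrow> i = j"
  unfolding controlled_def by blast

lemma controlled_sum_le:
  "controlled p q \<Longrightarrow> \<forall>l\<in>{p..<q}. \<kappa> \<le> k l \<Longrightarrow> (\<Sum>l\<in>{p..<q}. dJ l) \<le> bound \<kappa>"
  unfolding controlled_def by blast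

lemma split_at_min:
  assumes "p < q"
    and unique: "\<And>i j. i \<in> {p..<q} \<Longrightarrow> j \<in> {p..<q} \<Longrightarrow> \<forall>l\<in>{p..<q}. k i \<le> k l \<Longrightarrow>
      k j = k i \<Longrightarrow> i = j"
    and IH: "\<And>p' q'. {p'..<q'} \<subset> {p..<q} \<Longrightarrow> controlled p' q'"
  obtains M where "M \<in> {p..<q}" "\<forall>l\<in>{p..<q}. k M \<le> k l"
    "(\<Sum>l\<in>{p..<M}. dJ l) \<le> bound (k M + 1)" "(\<Sum>l\<in>{Suc M..<q}. dJ l) \<le> bound (k M + 1)"
proof -
  have "finite (k ` {p..<q})" "k ` {p..<q} \<noteq> {}" using \<open>p < q\<close> by auto
  then obtain M where M: "M \<in> {p..<q}" "k M = Min (k ` {p..<q})"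
    by (metis Min_in imageE)
  then have min: "\<forall>l\<in>{p..<q}. k M \<le> k l" by simp
  have above: "k M + 1 \<le> k l" if "l \<in> {p..<q}" "l \<noteq> M" for l
    using unique[OF M(1) that(1) min] min that by fastforce
  have "M \<in> {p..<q} - {p..<M}" "M \<in> {p..<q} - {Suc M..<q}"
    "{p..<M} \<subseteq> {p..<q}" "{Suc M..<q} \<subseteq> {p..<q}" using M(1) by auto
  then have "{p..<M} \<subset> {p..<q}" "{Suc M..<q} \<subset> {p..<q}" by (metis Diff_iff psubsetI)+
  then show thesis
    using M(1) min above by (intro that controlled_sum_le IH) auto
qed

lemma higher_segment_flanks_small:
  assumes "p < q" and higher: "\<forall>l\<in>{p..<q}. \<kappa> < k l"
    and IH: "\<And>p' q'. {p'..<q'} \<subseteq> {p..<q} \<Longrightarrow> controlled p' q'"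
  obtains M where "M \<in> {p..<q}" "\<kappa> < k M"
    "(\<Sum>l\<in>{p..<M}. dJ l) + (\<Sum>l\<in>{Suc M..<q}. dJ l) < \<xi> powi (- \<kappa>) * rm"
proof -
  have unique: "i = j" if "i \<in> {p..<q}" "j \<in> {p..<q}" "\<forall>l\<in>{p..<q}. k i \<le> k l" "k j = k i" for i j
    using controlled_unique[OF IH[OF order_refl] that(3,1,2) refl that(4)] .
  obtain M where M: "M \<in> {p..<q}" "\<forall>l\<in>{p..<q}. k M \<le> k l"
    "(\<Sum>l\<in>{p..<M}. dJ l) \<le> bound (k M + 1)" "(\<Sum>l\<in>{Suc M..<q}. dJ l) \<le> bound (k M + 1)"
    by (rule split_at_min[OF \<open>p < q\<close> unique IH[OF psubset_imp_subset]])
  have "\<kappa> < k M" using higher M(1) by blast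
  then have "bound (k M + 1) \<le> bound (\<kappa> + 2)" by (intro bound_antimono) simp
  then show thesis
    using that[OF M(1) \<open>\<kappa> < k M\<close>] M(3,4) two_bounds_less[of \<kappa>] by linarith
qed

lemma lies_between_subset_gap:
  assumes seg: "{i..j} \<subseteq> idx I" and "Suc i < j" and "lies_between S (a i) (b i) (a j) (b j)"
  shows "S \<subseteq> (\<Union>l\<in>{Suc i..<j}. J l)"
proof -
  obtain j' where j: "j = Suc j'" using \<open>Suc i < j\<close> not0_implies_Suc by fastforce
  have idx: "i \<in> idx I" "Suc i \<in> idx I" "j' \<in> idx I" "Suc j' \<in> idx I"
    using seg \<open>Suc i < j\<close> j by auto
  have "J i \<inter> J (Suc i) \<noteq> {}" "J j' \<inter> J (Suc j') \<noteq> {}"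
    by (rule chain; fact idx)+
  then obtain x y where x: "x \<in> J i" "x \<in> J (Suc i)" and y: "y \<in> J j'" "y \<in> J j"
    unfolding j by blast
  let ?W = "\<Union>l\<in>{Suc i..<j}. J l"
  have xW: "x \<in> ?W" and yW: "y \<in> ?W" using x(2) y(1) \<open>Suc i < j\<close> j by auto
  have "connected ?W" using seg by (intro connected_UN_J) auto
  then show ?thesis by (rule lies_between_subset_connected[OF _ xW x(1) yW y(2) assms(3)])
qed

lemma level_not_repeated_across_higher:
  assumes seg: "{i..j} \<subseteq> idx I" and "Suc i < j" and "k i = \<kappa>" "k j = \<kappa>"
    and higher: "\<And>l. i < l \<Longrightarrow> l < j \<Longrightarrow> \<kappa> < k l"
    and IH: "\<And>p q. {p..<q} \<subset> {i..j} \<Longrightarrow> controlled p q"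
  shows False
proof -
  have iI: "i \<in> idx I" and jI: "j \<in> idx I" using seg \<open>Suc i < j\<close> by auto
  have "i \<noteq> j" "k i = k j" using assms(2-4) by auto
  then obtain c d :: "nat \<Rightarrow> real" where "\<And>m. m < 3 \<Longrightarrow> c m \<le> d m"
    and large: "\<And>m. m < 3 \<Longrightarrow> \<xi> powi (- k i) * rm \<le> diameter (f ` {c m..d m})"
    and between: "\<And>m. m < 3 \<Longrightarrow> lies_between {c m..d m} (a i) (b i) (a j) (b j)"
    and disjoint: "\<And>m m'. m < 3 \<Longrightarrow> m' < 3 \<Longrightarrow> m \<noteq> m' \<Longrightarrow> {c m..d m} \<inter> {c m'..d m'} = {}"
    using three_separating_intervals[OF iI jI] by blast
  have large: "\<xi> powi (- \<kappa>) * rm \<le> diameter (f ` {c m..d m})" if "m < 3" for m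
    using large[OF that] \<open>k i = \<kappa>\<close> by simp
  have inner: "{Suc i..<j} \<subseteq> idx I" using seg by auto
  have inner_IH: "controlled p q" if "{p..<q} \<subseteq> {Suc i..<j}" for p q
  proof (rule IH)
    have "i \<in> {i..j} - {p..<q}" "{p..<q} \<subseteq> {i..j}" using that \<open>Suc i < j\<close> by auto
    then show "{p..<q} \<subset> {i..j}" by (metis Diff_iff psubsetI)
  qed
  have "\<forall>l\<in>{Suc i..<j}. \<kappa> < k l" using higher by simp
  then obtain M where M: "M \<in> {Suc i..<j}" "\<kappa> < k M"
    and small: "(\<Sum>l\<in>{Suc i..<M}. dJ l) + (\<Sum>l\<in>{Suc M..<j}. dJ l) < \<xi> powi (- \<kappa>) * rm"
    by (rule higher_segment_flanks_small[OF \<open>Suc i < j\<close> _ inner_IH])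
  have MI: "M \<in> idx I" using M(1) inner by blast
  have not_inside: "\<not> {c m..d m} \<subseteq> J M" if "m < 3" for m
    using large_not_subset_J[OF MI M(2) large[OF that]] .
  have "\<exists>m<3. {c m..d m} \<inter> J M = {}"
    by (rule one_of_three_disjoint_intervals_misses[OF not_inside disjoint])
  then obtain m0 where m0: "m0 < 3" "{c m0..d m0} \<inter> J M = {}" by blast
  then have "diameter (f ` {c m0..d m0}) \<le> (\<Sum>l\<in>{Suc i..<M}. dJ l) + (\<Sum>l\<in>{Suc M..<j}. dJ l)"
    using lies_between_subset_gap[OF seg \<open>Suc i < j\<close> between[OF m0(1)]]
    by (intro diameter_image_avoiding[OF inner M(1)]) auto
  then show False using small large[OF m0(1)] by linarith
qed

lemma lowest_level_unique:
  assumes seg: "{p..<q} \<subseteq> idx I" and low: "\<forall>l\<in>{p..<q}. \<kappa> \<le> k l"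
    and IH: "\<And>p' q'. {p'..<q'} \<subset> {p..<q} \<Longrightarrow> controlled p' q'"
    and ij: "i \<in> {p..<q}" "j \<in> {p..<q}" "k i = \<kappa>" "k j = \<kappa>"
  shows "i = j"
proof (rule ccontr)
  assume "i \<noteq> j"
  then obtain i' j' where ij': "i' \<in> {p..<q}" "j' \<in> {p..<q}" "i' < j'" "k i' = \<kappa>" "k j' = \<kappa>"
    using ij by (metis linorder_neqE_nat)
  define j0 where "j0 = (LEAST l. i' < l \<and> k l = \<kappa>)"
  have j0: "i' < j0" "k j0 = \<kappa>" "j0 \<le> j'"
    using LeastI[of "\<lambda>l. i' < l \<and> k l = \<kappa>" j'] Least_le[of "\<lambda>l. i' < l \<and> k l = \<kappa>" j'] ij'
    by (simp_all add: j0_def)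
  have sub: "{i'..j0} \<subseteq> {p..<q}" using ij' j0 by auto
  have higher: "\<kappa> < k l" if "i' < l" "l < j0" for l
  proof -
    have "k l \<noteq> \<kappa>" using not_less_Least[of l "\<lambda>l. i' < l \<and> k l = \<kappa>"] that by (simp add: j0_def)
    moreover have "l \<in> {p..<q}" using subsetD[OF sub, of l] that by simp
    ultimately show ?thesis using low by fastforce
  qed
  show False
  proof (cases "j0 = Suc i'")
    case True
    have "{i'..Suc i'} \<subseteq> idx I" using sub seg True by blast
    then have "i' \<in> idx I" "Suc i' \<in> idx I" by auto
    then show False
      using adjacent_levels_differ[of i'] True ij'(4) j0(2) by simp
  next
    case False
    have "{i'..j0} \<subseteq> idx I" using sub seg by blast
    moreover have "Suc i' < j0" using j0(1) False by linarith
    moreover have "controlled p' q'" if "{p'..<q'} \<subset> {i'..j0}" for p' q'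
      using IH[OF psubset_subset_trans[OF that sub]] .
    ultimately show False
      using level_not_repeated_across_higher[OF _ _ ij'(4) j0(2) higher] by blast
  qed
qed

lemma sum_le_bound_split:
  assumes seg: "{p..<q} \<subseteq> idx I" and M: "M \<in> {p..<q}" and "\<kappa> \<le> k M"
    and "(\<Sum>l\<in>{p..<M}. dJ l) \<le> bound (k M + 1)" "(\<Sum>l\<in>{Suc M..<q}. dJ l) \<le> bound (k M + 1)"
  shows "(\<Sum>l\<in>{p..<q}. dJ l) \<le> bound \<kappa>"
proof -
  have "(\<Sum>l\<in>{p..<q}. dJ l) = (\<Sum>l\<in>{p..<M}. dJ l) + (\<Sum>l\<in>{M..<q}. dJ l)"
    using M by (simp add: sum.atLeastLessThan_concat)
  also have "\<dots> = (\<Sum>l\<in>{p..<M}. dJ l) + dJ M + (\<Sum>l\<in>{Suc M..<q}. dJ l)"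
    using M by (simp add: sum.atLeast_Suc_lessThan)
  also have "\<dots> \<le> \<xi> powi (- k M) * rp + 2 * bound (k M + 1)"
    using assms diameter_J[of M] by auto
  also have "\<dots> \<le> bound (k M)"
    by (rule bound_recursion)
  also have "\<dots> \<le> bound \<kappa>"
    using assms(3) by (rule bound_antimono)
  finally show ?thesis .
qed

lemma controlled_segment: "{p..<q} \<subseteq> idx I \<Longrightarrow> controlled p q"
proof (induction "card {p..<q}" arbitrary: p q rule: less_induct)
  case less
  have IH: "controlled p' q'" if "{p'..<q'} \<subset> {p..<q}" for p' q'
    using less.hyps[OF psubset_card_mono[OF finite_atLeastLessThan that]] that less.prems by blast
  have unique: "i = j" if "\<forall>l\<in>{p..<q}. \<kappa> \<le> k l" "i \<in> {p..<q}" "j \<in> {p..<q}" "k i = \<kappa>" "k j = \<kappa>"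
    for \<kappa> i j
    using lowest_level_unique[OF less.prems that(1) IH that(2-5)] .
  have unique_min: "i = j" if "i \<in> {p..<q}" "j \<in> {p..<q}" "\<forall>l\<in>{p..<q}. k i \<le> k l" "k j = k i"
    for i j
    using unique[OF that(3,1,2) refl that(4)] .
  show "controlled p q"
    unfolding controlled_def
  proof (intro allI impI conjI ballI)
    fix \<kappa> assume low: "\<forall>l\<in>{p..<q}. \<kappa> \<le> k l"
    show "i = j" if "i \<in> {p..<q}" "j \<in> {p..<q}" "k i = \<kappa>" "k j = \<kappa>" for i j
      using unique[OF low that] .
    show "(\<Sum>l\<in>{p..<q}. dJ l) \<le> bound \<kappa>"
    proof (cases "p < q")
      case False
      then show ?thesis using bound_nonneg by simp
    next
      case True
      obtain M where M: "M \<in> {p..<q}" "\<forall>l\<in>{p..<q}. k M \<le> k l"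
        "(\<Sum>l\<in>{p..<M}. dJ l) \<le> bound (k M + 1)" "(\<Sum>l\<in>{Suc M..<q}. dJ l) \<le> bound (k M + 1)"
        by (rule split_at_min[OF True unique_min IH])
      then show ?thesis
        using sum_le_bound_split[OF less.prems M(1) _ M(3,4)] low by blast
    qed
  qed
qed

lemma dJ_nonneg: "l \<in> idx I \<Longrightarrow> 0 \<le> dJ l"
  by (simp add: bounded_image_J diameter_ge_0)

lemma initial_segment_idx: "q \<in> idx I \<Longrightarrow> {1..<Suc q} \<subseteq> idx I"
  by (auto simp: idx_def intro: order_trans[rotated])

lemma min_level_unique:
  assumes "M \<in> idx I" "M' \<in> idx I" "\<forall>i\<in>idx I. k M \<le> k i" "\<forall>i\<in>idx I. k M' \<le> k i"
  shows "M = M'"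
proof -
  define q where "q = max M M'"
  have "q \<in> idx I" using assms(1,2) by (simp add: q_def max_def)
  then have seg: "{1..<Suc q} \<subseteq> idx I" by (rule initial_segment_idx)
  have "M \<in> {1..<Suc q}" "M' \<in> {1..<Suc q}" "k M' = k M"
    using assms by (auto simp: q_def idx_def intro: order_antisym)
  moreover have "\<forall>l\<in>{1..<Suc q}. k M \<le> k l" using seg assms(3) by blast
  ultimately show ?thesis
    using controlled_unique[OF controlled_segment[OF seg]] by blast
qed

lemma finite_sum_le:
  assumes "finite F" "F \<subseteq> idx I" "\<forall>i\<in>idx I. \<kappa> \<le> k i"
  shows "sum dJ F \<le> bound \<kappa>"
proof (cases "F = {}")
  case True
  then show ?thesis using bound_nonneg by simp
next
  case False
  define q where "q = Max F"
  have "q \<in> F" using assms(1) False by (simp add: q_def)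
  then have seg: "{1..<Suc q} \<subseteq> idx I" using assms(2) by (intro initial_segment_idx) blast
  have "F \<subseteq> {1..<Suc q}"
    using assms(1,2) by (auto simp: q_def idx_def less_Suc_eq_le)
  then have "sum dJ F \<le> (\<Sum>l\<in>{1..<Suc q}. dJ l)"
    using seg dJ_nonneg by (intro sum_mono2) auto
  also have "\<dots> \<le> bound \<kappa>"
    using seg assms(3) by (intro controlled_sum_le controlled_segment) auto
  finally show ?thesis .
qed

end

lemma int_bdd_below_attains_min:
  fixes k :: "'a \<Rightarrow> int"
  assumes "x \<in> S" "\<forall>i\<in>S. B \<le> k i"
  shows "\<exists>M\<in>S. \<forall>i\<in>S. k M \<le> k i"
proof -
  obtain M where M: "M \<in> S" "\<forall>i. i \<in> S \<longrightarrow> nat (k M - B) \<le> nat (k i - B)"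
    using ex_has_least_nat[of "\<lambda>i. i \<in> S" x "\<lambda>i. nat (k i - B)"] assms(1) by blast
  have "k M \<le> k i" if "i \<in> S" for i
    using M(2) assms(2) that by fastforce
  then show ?thesis using M(1) by blast
qed

theorem mainTheorem18:
  fixes f :: "real \<Rightarrow> 'X::metric_space"
    and \<xi> rm rp :: real
    and I :: enat
    and a b :: "nat \<Rightarrow> real"
    and k :: "nat \<Rightarrow> int"
  assumes cont: "continuous_on {0..1} f"
    and xi: "\<xi> > 6"
    and r: "0 < rm" "rm < rp"
    and I1: "I \<ge> 1"
    and J: "\<And>i. i \<in> idx I \<Longrightarrow> 0 \<le> a i \<and> a i \<le> b i \<and> b i \<le> 1"
    and kbdd: "\<exists>B. \<forall>i\<in>idx I. B \<le> k i"
    and chain: "\<And>i. i \<in> idx I \<Longrightarrow> Suc i \<in> idx I \<Longrightarrow> {a i..b i} \<inter> {a (Suc i)..b (Suc i)} \<noteq> {}"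
    and diamJ: "\<And>i. i \<in> idx I \<Longrightarrow> diameter (f ` {a i..b i}) \<le> \<xi> powi (- k i) * rp"
    and sep: "\<And>i j. i \<in> idx I \<Longrightarrow> j \<in> idx I \<Longrightarrow> i \<noteq> j \<Longrightarrow> k i = k j \<Longrightarrow>
        \<exists>c d :: nat \<Rightarrow> real.
          (\<forall>m < nat \<lceil>3 * rp / rm\<rceil>. 0 \<le> c m \<and> c m \<le> d m \<and> d m \<le> 1
              \<and> diameter (f ` {c m..d m}) \<ge> \<xi> powi (- k i) * rm
              \<and> lies_between {c m..d m} (a i) (b i) (a j) (b j))
          \<and> (\<forall>m < nat \<lceil>3 * rp / rm\<rceil>. \<forall>m' < nat \<lceil>3 * rp / rm\<rceil>.
               m \<noteq> m' \<longrightarrow> {c m..d m} \<inter> {c m'..d m'} = {})"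
    and xir: "\<xi> > rp / rm"
  shows "(\<exists>!M. M \<in> idx I \<and> (\<forall>i\<in>idx I. k M \<le> k i)) \<and>
         (\<exists>M. M \<in> idx I \<and> (\<forall>i\<in>idx I. k M \<le> k i) \<and>
           (\<lambda>i. diameter (f ` {a i..b i})) summable_on idx I \<and>
           (\<Sum>\<^sub>\<infinity>i\<in>idx I. diameter (f ` {a i..b i})) \<le> (1 + 3 / \<xi>) * \<xi> powi (- k M) * rp)"
proof -
  interpret separated_chain f \<xi> rm rp I a b k
    by unfold_locales (fact cont xi r J chain diamJ sep xir)+
  obtain B where B: "\<forall>i\<in>idx I. B \<le> k i" using kbdd by blast
  have "1 \<in> idx I" using I1 by (simp add: idx_def one_enat_def)
  then obtain M where M: "M \<in> idx I" "\<forall>i\<in>idx I. k M \<le> k i"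
    using int_bdd_below_attains_min[OF _ B] by blast
  have sums: "sum dJ F \<le> bound (k M)" if "finite F" "F \<subseteq> idx I" for F
    using finite_sum_le[OF that M(2)] .
  have summable: "dJ summable_on idx I"
    using dJ_nonneg sums by (intro nonneg_bdd_above_summable_on bdd_aboveI2) auto
  have "(\<Sum>\<^sub>\<infinity>i\<in>idx I. dJ i) \<le> bound (k M)"
    using summable sums by (rule infsum_le_finite_sums)
  moreover have "\<exists>!M. M \<in> idx I \<and> (\<forall>i\<in>idx I. k M \<le> k i)"
    using M min_level_unique by blast
  ultimately show ?thesis
    using M summable unfolding bound_def by blast
qed

end
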